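(* Assume the standing assumptions. Let $\bar u\in V$ be a local solution of problem (P) with radius $\rho>0$, i.e. $\Phi_0(\bar u)\le\Phi_0(u)$ for all $u\in V$ with $\|u-\bar u\|_V\le\rho$. Let $(\epsilon_k)$ be a sequence of positive numbers with $\epsilon_k\to0$, and for each $k$ let $u_k$ be a global solution of the auxiliary problem \[ \min_{u\in V}\ \Phi_{\epsilon_k}(u)+\frac12\|u-\bar u\|_{L^2(\Omega)}^2\quad\text{subject to}\quad \|u-\bar u\|_V\le\rho . \] Then $u_k\to\bar u$ strongly in $V$.
   Context: Standing assumptions: $\Omega\subset\mathbb R^d$ is a bounded Lipschitz domain; $V$ is a real Hilbert space with inner product $\langle\cdot,\cdot\rangle_V$, $V\subset L^2(\Omega)$ with compact and dense embedding; $V^*$ is its dual with pairing $\langle\cdot,\cdot\rangle_{V^*,V}$. $F:V\to\mathbb R$ is weakly lower semicontinuous, bounded below by an affine function ($F(u)\ge\langle g,u\rangle_{V^*,V}+c$ for some $g\in V^*$, $c\in\mathbb R$), and continuously Fréchet differentiable. $\alpha>0$, $\beta>0$, $p\in(0,1)$. For $\epsilon>0$, $\psi_\epsilon(t)=\frac p2\frac{t}{\epsilon^{2-p}}+(1-\frac p2)\epsilon^p$ if $t\in[0,\epsilon^2)$ and $\psi_\epsilon(t)=t^{p/2}$ if $t\ge\epsilon^2$; $\psi_0(t)=t^{p/2}$. $G_\epsilon(u):=\int_\Omega\psi_\epsilon(|u|^2)\,dx$ (so $G_0(u)=\int_\Omega|u|^p\,dx$), and $\Phi_\epsilon(u):=F(u)+\frac\alpha2\|u\|_V^2+\beta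 G_\epsilon(u)$ for $\epsilon\ge0$. Problem (P) is $\min_{u\in V}\Phi_0(u)$. *)

theory Defs
  imports "HOL-Analysis.Analysis"
begin

definition lipschitz_boundary :: "(real^'n::finite) set \<Rightarrow> bool" where
  "lipschitz_boundary \<Omega> \<longleftrightarrow>
     (\<forall>x\<in>frontier \<Omega>. \<exists>r>0. \<exists>(R :: real^'n \<Rightarrow> real^'n) i (h :: real^'n \<Rightarrow> real) (L::real).
        orthogonal_transformation R \<and> lipschitz_on L UNIV h \<and>
        (\<forall>y\<in>ball x r. y \<in> \<Omega> \<longleftrightarrow>
            (R y) $ i < h (\<chi> j. if j = i then 0 else (R y) $ j)))"

definition bounded_lipschitz_domain :: "(real^'n::finite) set \<Rightarrow> bool" where
  "bounded_lipschitz_domain \<Omega> \<longleftrightarrow>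
     open \<Omega> \<and> connected \<Omega> \<and> \<Omega> \<noteq> {} \<and> bounded \<Omega> \<and> lipschitz_boundary \<Omega>"

definition in_L2 :: "(real^'n::finite) set \<Rightarrow> (real^'n \<Rightarrow> real) \<Rightarrow> bool" where
  "in_L2 \<Omega> f \<longleftrightarrow> f \<in> borel_measurable (lebesgue_on \<Omega>) \<and>
                     integrable (lebesgue_on \<Omega>) (\<lambda>x. (f x)\<^sup>2)"

definition L2_norm :: "(real^'n::finite) set \<Rightarrow> (real^'n \<Rightarrow> real) \<Rightarrow> real" where
  "L2_norm \<Omega> f = sqrt (\<integral>x. (f x)\<^sup>2 \<partial>lebesgue_on \<Omega>)"

text \<open>V is a real Hilbert space (type 'v), embedded into L^2(Omega) by iota
  (each u in V is identified with the function iota u): the embedding is linear,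
  injective (modulo a.e. equality), continuous, compact and has dense range.\<close>
definition compact_dense_embedding ::
  "(real^'n::finite) set \<Rightarrow> ('v::{real_inner,complete_space} \<Rightarrow> (real^'n \<Rightarrow> real)) \<Rightarrow> bool" where
  "compact_dense_embedding \<Omega> \<iota> \<longleftrightarrow>
     (\<forall>u. in_L2 \<Omega> (\<iota> u)) \<and>
     (\<forall>a b u v x. \<iota> (a *\<^sub>R u + b *\<^sub>R v) x = a * \<iota> u x + b * \<iota> v x) \<and>
     (\<forall>u. (AE x in lebesgue_on \<Omega>. \<iota> u x = 0) \<longrightarrow> u = 0) \<and>
     (\<exists>C. \<forall>u. L2_norm \<Omega> (\<iota> u) \<le> C * norm u) \<and>
     (\<forall>s :: nat \<Rightarrow> 'v. bounded (range s) \<longrightarrow>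
        (\<exists>r f. strict_mono r \<and> in_L2 \<Omega> f \<and>
            (\<lambda>n. L2_norm \<Omega> (\<lambda>x. \<iota> (s (r n)) x - f x)) \<longlonglongrightarrow> 0)) \<and>
     (\<forall>f. in_L2 \<Omega> f \<longrightarrow> (\<forall>e>0. \<exists>v. L2_norm \<Omega> (\<lambda>x. \<iota> v x - f x) < e))"

definition weakly_converges :: "(nat \<Rightarrow> 'v::real_inner) \<Rightarrow> 'v \<Rightarrow> bool" where
  "weakly_converges s u \<longleftrightarrow> (\<forall>w. (\<lambda>n. inner (s n) w) \<longlonglongrightarrow> inner u w)"

definition weakly_lsc :: "('v::real_inner \<Rightarrow> real) \<Rightarrow> bool" where
  "weakly_lsc F \<longleftrightarrow>
     (\<forall>s u. weakly_converges s u \<longrightarrow> ereal (F u) \<le> liminf (\<lambda>n. ereal (F (s n))))"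

definition affine_lower_bound :: "('v::real_normed_vector \<Rightarrow> real) \<Rightarrow> bool" where
  "affine_lower_bound F \<longleftrightarrow> (\<exists>g c. bounded_linear g \<and> (\<forall>u. g u + c \<le> F u))"

definition C1_frechet :: "('v::real_normed_vector \<Rightarrow> real) \<Rightarrow> bool" where
  "C1_frechet F \<longleftrightarrow> (\<exists>F' :: 'v \<Rightarrow> ('v \<Rightarrow>\<^sub>L real).
       (\<forall>u. (F has_derivative blinfun_apply (F' u)) (at u)) \<and> continuous_on UNIV F')"

definition psi :: "real \<Rightarrow> real \<Rightarrow> real \<Rightarrow> real" where
  "psi p \<epsilon> t = (if \<epsilon> > 0 \<and> t < \<epsilon>\<^sup>2
                  then p / 2 * t / \<epsilon> powr (2 - p) + (1 - p / 2) * \<epsilon> powr p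
                  else t powr (p / 2))"

definition G :: "(real^'n::finite) set \<Rightarrow> ('v \<Rightarrow> (real^'n \<Rightarrow> real)) \<Rightarrow> real \<Rightarrow> real \<Rightarrow> 'v \<Rightarrow> real" where
  "G \<Omega> \<iota> p \<epsilon> u = (\<integral>x. psi p \<epsilon> ((\<iota> u x)\<^sup>2) \<partial>lebesgue_on \<Omega>)"

definition Phi :: "(real^'n::finite) set \<Rightarrow> ('v::real_normed_vector \<Rightarrow> (real^'n \<Rightarrow> real)) \<Rightarrow>
                   ('v \<Rightarrow> real) \<Rightarrow> real \<Rightarrow> real \<Rightarrow> real \<Rightarrow> real \<Rightarrow> 'v \<Rightarrow> real" where
  "Phi \<Omega> \<iota> F \<alpha> \<beta> p \<epsilon> u = F u + \<alpha> / 2 * (norm u)\<^sup>2 + \<beta> * G \<Omega> \<iota> p \<epsilon> u"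

end

theory Submission
  imports Defs
begin

text \<open>Testing the auxiliary problem with ubar and using |Phi_eps - Phi_0| <= beta eps^p |Omega|
  shows ||u_k - ubar||_L2^2 <= 4 beta eps_k^p |Omega| -> 0 and Phi_0(u_k) <= Phi_0(ubar) + o(1).
  The sequence is bounded in V and the squared L2 distance is a convex definite functional on V,
  so a Mazur-type argument (minimal-norm points of the nested convex hulls of the tails) gives
  weak convergence u_k -> ubar in V. G_0 is continuous under L2 convergence and F is weakly lower
  semicontinuous, hence limsup ||u_k|| <= ||ubar||, and in a Hilbert space weak convergence with
  this norm bound is strong convergence.\<close>

lemma norm_diff_power2_midpoint:
  fixes a b :: "'a::real_inner"
  shows "(norm (a - b))\<^sup>2 = 2 * (norm a)\<^sup>2 + 2 * (norm b)\<^sup>2 - 4 * (norm ((1/2) *\<^sub>R a + (1/2) *\<^sub>R b))\<^sup>2"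
  by (simp add: power2_norm_eq_inner inner_diff_left inner_diff_right inner_add_left
      inner_add_right inner_commute algebra_simps)

lemma Cauchy_if_power2_dist_le_null:
  fixes y :: "nat \<Rightarrow> 'a::real_normed_vector"
  assumes "r \<longlonglongrightarrow> 0" "decseq r" and close: "\<And>N M. N \<le> M \<Longrightarrow> (norm (y N - y M))\<^sup>2 \<le> r N"
  shows "Cauchy y"
proof (rule metric_CauchyI)
  fix e :: real assume "0 < e"
  then obtain N where N: "r N < e\<^sup>2"
    using order_tendstoD(2)[OF \<open>r \<longlonglongrightarrow> 0\<close>, of "e\<^sup>2"] eventually_sequentially by auto
  have "dist (y m) (y n) < e" if "N \<le> m" "N \<le> n" for m n
  proof -
    have "(norm (y m - y n))\<^sup>2 \<le> r (min m n)"
      using close[of m n] close[of n m] by (cases "m \<le> n") (auto simp: norm_minus_commute)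
    also have "\<dots> \<le> r N" using \<open>decseq r\<close> that by (simp add: decseq_def)
    finally have "(norm (y m - y n))\<^sup>2 < e\<^sup>2" using N by linarith
    then show ?thesis using \<open>0 < e\<close> by (simp add: dist_norm power2_less_imp_less)
  qed
  then show "\<exists>M. \<forall>m\<ge>M. \<forall>n\<ge>M. dist (y m) (y n) < e" by blast
qed

lemma nested_convex_sets_convergent_selection:
  fixes H :: "nat \<Rightarrow> 'a::{real_inner,complete_space} set"
  assumes dec: "decseq H" and cvx: "\<And>N. convex (H N)" and ne: "\<And>N. H N \<noteq> {}"
    and bnd: "\<And>N y. y \<in> H N \<Longrightarrow> norm y \<le> B"
  shows "\<exists>y x. (\<forall>N. y N \<in> H N) \<and> y \<longlonglongrightarrow> x"
proof -
  define \<nu> where "\<nu> N = Inf ((\<lambda>y. (norm y)\<^sup>2) ` H N)" for N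
  have bdd: "bdd_below ((\<lambda>y. (norm y)\<^sup>2) ` H N)" for N
    by (rule bdd_belowI[of _ 0]) auto
  have \<nu>_le: "\<nu> N \<le> (norm y)\<^sup>2" if "y \<in> H N" for y N
    unfolding \<nu>_def using that bdd by (auto intro: cInf_lower)
  have "incseq \<nu>"
    unfolding incseq_def \<nu>_def
    using ne bdd dec by (auto intro!: cInf_superset_mono image_mono simp: decseq_def) blast
  moreover have "\<nu> N \<le> B\<^sup>2" for N
  proof -
    obtain y where "y \<in> H N" using ne by blast
    then show ?thesis using \<nu>_le bnd by (smt (verit) norm_ge_zero power_mono)
  qed
  ultimately obtain L where \<nu>_lim: "\<nu> \<longlonglongrightarrow> L" and \<nu>_L: "\<And>N. \<nu> N \<le> L"
    using incseq_convergent by blast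
  have "\<exists>y \<in> H N. (norm y)\<^sup>2 < \<nu> N + inverse (Suc N)" for N
    using cInf_lessD[of "(\<lambda>y. (norm y)\<^sup>2) ` H N" "\<nu> N + inverse (Suc N)"] ne[of N]
    unfolding \<nu>_def by auto
  then obtain y where y: "\<And>N. y N \<in> H N" and y_norm: "\<And>N. (norm (y N))\<^sup>2 < \<nu> N + inverse (Suc N)"
    by metis
  define r where "r N = 2 * (L - \<nu> N) + 4 * inverse (Suc N)" for N
  have r_lim: "r \<longlonglongrightarrow> 0"
  proof -
    have "(\<lambda>N. 2 * (L - \<nu> N) + 4 * inverse (Suc N)) \<longlonglongrightarrow> 2 * (L - L) + 4 * 0"
      by (intro tendsto_intros \<nu>_lim LIMSEQ_inverse_real_of_nat)
    then show ?thesis by (simp add: r_def [abs_def])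
  qed
  have "decseq r"
  proof (rule decseq_SucI)
    fix N
    have "inverse (real (Suc (Suc N))) \<le> inverse (Suc N)" by (simp add: le_imp_inverse_le)
    then show "r (Suc N) \<le> r N"
      using \<open>incseq \<nu>\<close> unfolding r_def by (smt (verit) incseq_SucD)
  qed
  \<comment> \<open>The midpoint of y N and y M lies in H N, so the parallelogram law bounds their distance.\<close>
  have "(norm (y N - y M))\<^sup>2 \<le> r N" if "N \<le> M" for N M
  proof -
    have "y M \<in> H N" using y dec that by (auto simp: decseq_def)
    then have "(1/2) *\<^sub>R y N + (1/2) *\<^sub>R y M \<in> H N"
      using cvx y by (intro convexD) auto
    then have "\<nu> N \<le> (norm ((1/2) *\<^sub>R y N + (1/2) *\<^sub>R y M))\<^sup>2" by (rule \<nu>_le)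
    moreover have "inverse (real (Suc M)) \<le> inverse (Suc N)"
      using that by (simp add: le_imp_inverse_le)
    ultimately show ?thesis
      using y_norm[of N] y_norm[of M] \<nu>_L[of M] norm_diff_power2_midpoint[of "y N" "y M"]
      unfolding r_def by argo
  qed
  with r_lim \<open>decseq r\<close> have "Cauchy y" by (rule Cauchy_if_power2_dist_le_null)
  then show ?thesis using y Cauchy_convergent_iff convergent_def by blast
qed

lemma convex_on_imp_convex_sublevel:
  assumes "convex_on UNIV q"
  shows "convex {x. q x \<le> e}"
proof (rule convexI)
  fix x y and a b :: real
  assume "x \<in> {x. q x \<le> e}" "y \<in> {x. q x \<le> e}" "0 \<le> a" "0 \<le> b" "a + b = 1"
  then have "q (a *\<^sub>R x + b *\<^sub>R y) \<le> a * e + b * e"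
    using assms unfolding convex_on_def
    by (smt (verit, best) UNIV_I mem_Collect_eq mult_left_mono)
  then show "a *\<^sub>R x + b *\<^sub>R y \<in> {x. q x \<le> e}"
    using \<open>a + b = 1\<close> by (simp add: distrib_right[symmetric])
qed

lemma eventually_inner_less_if_convex_null:
  fixes q :: "'a::{real_inner,complete_space} \<Rightarrow> real" and d :: "nat \<Rightarrow> 'a"
  assumes q_convex: "convex_on UNIV q"
    and q_quasi_subadd: "\<And>x y. q (x + y) \<le> 2 * q x + 2 * q y"
    and q_bound: "\<And>x. q x \<le> C * (norm x)\<^sup>2"
    and q_definite: "\<And>x. q x \<le> 0 \<Longrightarrow> x = 0"
    and d_bounded: "\<And>n. norm (d n) \<le> B"
    and q_lim: "(\<lambda>n. q (d n)) \<longlonglongrightarrow> 0"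
    and "c > 0"
  shows "eventually (\<lambda>n. inner (d n) w < c) sequentially"
proof (rule ccontr)
  assume "\<not> eventually (\<lambda>n. inner (d n) w < c) sequentially"
  then have frequent: "\<exists>n\<ge>N. c \<le> inner (d n) w" for N
    unfolding eventually_sequentially by (meson not_le)
  define H where "H N = convex hull (d ` {n. N \<le> n \<and> c \<le> inner (d n) w})" for N
  have "decseq H"
    unfolding decseq_def H_def by (auto intro!: hull_mono)
  moreover have "convex (H N)" for N
    unfolding H_def by simp
  moreover have "H N \<noteq> {}" for N
    using frequent[of N] unfolding H_def by auto
  moreover have "norm z \<le> B" if "z \<in> H N" for z N
  proof -
    have "H N \<subseteq> cball 0 B"
      unfolding H_def by (rule hull_minimal) (auto simp: d_bounded)
    then show ?thesis using that by auto
  qed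
  ultimately obtain y x where y: "\<And>N. y N \<in> H N" and "y \<longlonglongrightarrow> x"
    using nested_convex_sets_convergent_selection by blast
  have "c \<le> inner w x"
  proof (rule LIMSEQ_le_const)
    show "(\<lambda>N. inner w (y N)) \<longlonglongrightarrow> inner w x" by (intro tendsto_intros \<open>y \<longlonglongrightarrow> x\<close>)
    have "H N \<subseteq> {z. c \<le> inner w z}" for N
      unfolding H_def by (rule hull_minimal) (use convex_halfspace_ge[of c w] in \<open>auto simp: inner_commute\<close>)
    then show "\<exists>N. \<forall>n\<ge>N. c \<le> inner w (y n)" using y by blast
  qed
  \<comment> \<open>Quasi-subadditivity replaces lower semicontinuity: limits of points of {q \<le> e} lie in {q \<le> 2e}.\<close>
  have q_x: "q x \<le> 2 * e" if "e > 0" for e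
  proof -
    obtain N0 where N0: "\<And>n. N0 \<le> n \<Longrightarrow> q (d n) \<le> e"
      using order_tendstoD(2)[OF q_lim \<open>e > 0\<close>] unfolding eventually_sequentially by force
    have q_y: "q (y N) \<le> e" if "N0 \<le> N" for N
    proof -
      have "H N \<subseteq> {z. q z \<le> e}"
        unfolding H_def using N0 that by (intro hull_minimal convex_on_imp_convex_sublevel[OF q_convex]) auto
      then show ?thesis using y by blast
    qed
    have "(\<lambda>N. 2 * C * (norm (x - y N))\<^sup>2 + 2 * e) \<longlonglongrightarrow> 2 * C * (norm (x - x))\<^sup>2 + 2 * e"
      by (intro tendsto_intros \<open>y \<longlonglongrightarrow> x\<close>)
    moreover have "q x \<le> 2 * C * (norm (x - y N))\<^sup>2 + 2 * e" if "N0 \<le> N" for N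
      using q_quasi_subadd[of "x - y N" "y N"] q_bound[of "x - y N"] q_y[OF that] by simp
    ultimately show ?thesis
      by (intro LIMSEQ_le_const) auto
  qed
  have "q x \<le> 0"
  proof (rule field_le_epsilon)
    fix e :: real assume "0 < e"
    then show "q x \<le> 0 + e" using q_x[of "e / 2"] by simp
  qed
  then have "x = 0" by (rule q_definite)
  with \<open>c \<le> inner w x\<close> \<open>c > 0\<close> show False by simp
qed

lemma weakly_converges_zero_if_convex_null:
  fixes q :: "'a::{real_inner,complete_space} \<Rightarrow> real" and d :: "nat \<Rightarrow> 'a"
  assumes "convex_on UNIV q"
    and "\<And>x y. q (x + y) \<le> 2 * q x + 2 * q y"
    and "\<And>x. q x \<le> C * (norm x)\<^sup>2"
    and "\<And>x. q x \<le> 0 \<Longrightarrow> x = 0"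
    and "\<And>n. norm (d n) \<le> B"
    and "(\<lambda>n. q (d n)) \<longlonglongrightarrow> 0"
  shows "weakly_converges d 0"
  unfolding weakly_converges_def
proof (intro allI order_tendstoI)
  fix w :: 'a and c :: real
  assume "c < inner 0 w"
  then have "eventually (\<lambda>n. inner (d n) (- w) < - c) sequentially"
    by (intro eventually_inner_less_if_convex_null[OF assms]) auto
  then show "eventually (\<lambda>n. c < inner (d n) w) sequentially"
    by (simp add: inner_minus_right)
next
  fix w :: 'a and c :: real
  assume "inner 0 w < c"
  then show "eventually (\<lambda>n. inner (d n) w < c) sequentially"
    by (intro eventually_inner_less_if_convex_null[OF assms]) auto
qed

lemma tendsto_if_weakly_converges_norm_limsup:
  fixes u :: "nat \<Rightarrow> 'a::real_inner"
  assumes weak: "weakly_converges u x"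
    and limsup: "\<And>e. e > 0 \<Longrightarrow> eventually (\<lambda>k. (norm (u k))\<^sup>2 < (norm x)\<^sup>2 + e) sequentially"
  shows "u \<longlonglongrightarrow> x"
proof -
  have "(\<lambda>k. (norm (u k - x))\<^sup>2) \<longlonglongrightarrow> 0"
  proof (rule order_tendstoI)
    fix a :: real assume "a < 0"
    then show "eventually (\<lambda>k. a < (norm (u k - x))\<^sup>2) sequentially"
      by (intro always_eventually allI) (smt (verit) zero_le_power2)
  next
    fix e :: real assume "0 < e"
    have "(\<lambda>k. inner (u k) x) \<longlonglongrightarrow> (norm x)\<^sup>2"
      using weak unfolding weakly_converges_def by (simp add: power2_norm_eq_inner)
    then have "eventually (\<lambda>k. (norm x)\<^sup>2 - e / 4 < inner (u k) x) sequentially"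
      using \<open>0 < e\<close> by (intro order_tendstoD(1)) auto
    moreover have "eventually (\<lambda>k. (norm (u k))\<^sup>2 < (norm x)\<^sup>2 + e / 2) sequentially"
      using \<open>0 < e\<close> by (intro limsup) auto
    ultimately show "eventually (\<lambda>k. (norm (u k - x))\<^sup>2 < e) sequentially"
    proof eventually_elim
      case (elim k)
      have "(norm (u k - x))\<^sup>2 = (norm (u k))\<^sup>2 - 2 * inner (u k) x + (norm x)\<^sup>2"
        by (simp add: power2_norm_eq_inner inner_diff_left inner_diff_right inner_commute)
      with elim show ?case by linarith
    qed
  qed
  then have "(\<lambda>k. norm (u k - x)) \<longlonglongrightarrow> 0"
    using tendsto_real_sqrt by fastforce
  then show ?thesis
    using tendsto_norm_zero_iff LIM_zero_cancel by blast
qed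

lemma powr_add_le:
  fixes x y p :: real
  assumes "0 \<le> x" "0 \<le> y" "0 < p" "p \<le> 1"
  shows "(x + y) powr p \<le> x powr p + y powr p"
proof (cases "x + y = 0")
  case False
  define s where "s = x + y"
  have "s > 0" using False assms by (simp add: s_def)
  \<comment> \<open>Both fractions lie in [0,1], where r \<le> r powr p.\<close>
  have "x / s \<le> (x / s) powr p" "y / s \<le> (y / s) powr p"
    using powr_mono'[of p 1 "x / s"] powr_mono'[of p 1 "y / s"] assms \<open>s > 0\<close> by (auto simp: s_def)
  have "(x + y) powr p = s powr p * (x / s + y / s)"
    using \<open>s > 0\<close> by (simp add: s_def add_divide_distrib[symmetric])
  also have "\<dots> \<le> s powr p * ((x / s) powr p + (y / s) powr p)"
    using \<open>x / s \<le> (x / s) powr p\<close> \<open>y / s \<le> (y / s) powr p\<close> by (intro mult_left_mono) auto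
  also have "\<dots> = x powr p + y powr p"
    using \<open>s > 0\<close> assms by (simp add: powr_divide distrib_left)
  finally show ?thesis .
qed (use assms in auto)

lemma abs_powr_diff_le:
  fixes a b p :: real
  assumes "0 < p" "p \<le> 1"
  shows "\<bar>\<bar>a\<bar> powr p - \<bar>b\<bar> powr p\<bar> \<le> \<bar>a - b\<bar> powr p"
proof -
  have "\<bar>a\<bar> powr p \<le> \<bar>b\<bar> powr p + \<bar>a - b\<bar> powr p" for a b :: real
  proof -
    have "\<bar>a\<bar> powr p \<le> (\<bar>b\<bar> + \<bar>a - b\<bar>) powr p" using assms by (intro powr_mono2) auto
    also have "\<dots> \<le> \<bar>b\<bar> powr p + \<bar>a - b\<bar> powr p" using assms by (intro powr_add_le) auto
    finally show ?thesis .
  qed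
  from this[of a b] this[of b a] show ?thesis
    unfolding abs_minus_commute[of b a] by arith
qed

lemma powr_le_split:
  fixes t \<delta> p :: real
  assumes "0 \<le> t" "0 < \<delta>" "0 \<le> p" "p \<le> 2"
  shows "t powr p \<le> \<delta> powr p + \<delta> powr (p - 2) * t\<^sup>2"
proof (cases "t \<le> \<delta>")
  case True
  then have "t powr p \<le> \<delta> powr p" using assms by (intro powr_mono2) auto
  then show ?thesis by (simp add: add_increasing2)
next
  case False
  then have "t > 0" using assms by simp
  have "t powr p = t powr (p - 2) * t powr 2"
    by (simp add: powr_add[symmetric])
  also have "\<dots> = t powr (p - 2) * t\<^sup>2"
    using \<open>t > 0\<close> by simp
  also have "\<dots> \<le> \<delta> powr (p - 2) * t\<^sup>2"
    using powr_mono2'[of "p - 2" \<delta> t] False assms by (intro mult_right_mono) auto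
  finally show ?thesis by (simp add: add_increasing)
qed

lemma power2_powr_half: "(a\<^sup>2) powr (q / 2) = \<bar>a\<bar> powr q" for a q :: real
proof -
  have "(a\<^sup>2) powr (q / 2) = (\<bar>a\<bar> powr 2) powr (q / 2)" by simp
  also have "\<dots> = \<bar>a\<bar> powr (2 * (q / 2))" by (rule powr_powr)
  finally show ?thesis by simp
qed

lemma psi_zero: "psi p 0 t = t powr (p / 2)"
  by (simp add: psi_def)

lemma psi_below_threshold:
  assumes "0 \<le> p" "p \<le> 2" "0 < \<epsilon>" "0 \<le> t" "t < \<epsilon>\<^sup>2"
  shows "0 \<le> psi p \<epsilon> t" "psi p \<epsilon> t \<le> \<epsilon> powr p"
proof -
  define A where "A = t / \<epsilon> powr (2 - p)"
  have "\<epsilon>\<^sup>2 / \<epsilon> powr (2 - p) = \<epsilon> powr p"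
    using \<open>0 < \<epsilon>\<close> by (simp add: powr_diff powr_powr[symmetric] flip: powr_numeral)
  moreover have "t / \<epsilon> powr (2 - p) \<le> \<epsilon>\<^sup>2 / \<epsilon> powr (2 - p)"
    using assms by (intro divide_right_mono) auto
  ultimately have "0 \<le> A" "A \<le> \<epsilon> powr p"
    using assms by (auto simp: A_def)
  moreover have "psi p \<epsilon> t = p / 2 * A + (1 - p / 2) * \<epsilon> powr p"
    using assms by (simp add: psi_def A_def)
  moreover have "p / 2 * A \<le> p / 2 * \<epsilon> powr p"
    using \<open>A \<le> \<epsilon> powr p\<close> assms by (intro mult_left_mono) auto
  moreover have "0 \<le> p / 2 * A" "0 \<le> (1 - p / 2) * \<epsilon> powr p"
    using \<open>0 \<le> A\<close> assms by auto
  ultimately show "0 \<le> psi p \<epsilon> t" "psi p \<epsilon> t \<le> \<epsilon> powr p"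
    by (auto simp: algebra_simps)
qed

lemma abs_psi_diff_psi_zero:
  assumes "0 \<le> p" "p \<le> 2" "0 \<le> \<epsilon>" "0 \<le> t"
  shows "\<bar>psi p \<epsilon> t - psi p 0 t\<bar> \<le> \<epsilon> powr p"
proof (cases "\<epsilon> > 0 \<and> t < \<epsilon>\<^sup>2")
  case True
  have "t powr (p / 2) \<le> (\<epsilon>\<^sup>2) powr (p / 2)"
    using True assms by (intro powr_mono2) auto
  also have "\<dots> = \<epsilon> powr p"
    using True by (simp add: powr_powr flip: powr_numeral)
  finally have "t powr (p / 2) \<le> \<epsilon> powr p" .
  moreover have "0 \<le> psi p \<epsilon> t" "psi p \<epsilon> t \<le> \<epsilon> powr p"
    using psi_below_threshold[of p \<epsilon> t] True assms by auto
  ultimately show ?thesis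
    using powr_ge_zero[of t "p / 2"] unfolding psi_zero abs_le_iff by linarith
qed (auto simp: psi_def)

lemma psi_nonneg:
  assumes "0 \<le> p" "p \<le> 2" "0 \<le> t"
  shows "0 \<le> psi p \<epsilon> t"
  using psi_below_threshold[of p \<epsilon> t] assms by (auto simp: psi_def)

lemma psi_le:
  assumes "0 \<le> p" "p \<le> 2" "0 \<le> \<epsilon>" "0 \<le> t"
  shows "psi p \<epsilon> t \<le> \<epsilon> powr p + 1 + t"
proof -
  have "t powr (p / 2) \<le> 1 + t"
  proof (cases "t \<le> 1")
    case True
    then show ?thesis using assms powr_le1[of "p / 2" t] by auto
  next
    case False
    then show ?thesis using assms powr_mono[of "p / 2" 1 t] by auto
  qed
  then show ?thesis
    using abs_psi_diff_psi_zero[OF assms] by (simp add: psi_zero abs_le_iff)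
qed

lemma eventually_greater_if_weakly_lsc:
  assumes "weakly_lsc F" "weakly_converges u v" "0 < \<eta>"
  shows "eventually (\<lambda>k. F v - \<eta> < F (u k)) sequentially"
proof -
  have "ereal (F v) \<le> liminf (\<lambda>k. ereal (F (u k)))"
    using assms unfolding weakly_lsc_def by blast
  moreover have "ereal (F v - \<eta>) < ereal (F v)" using \<open>0 < \<eta>\<close> by simp
  ultimately have "eventually (\<lambda>k. ereal (F v - \<eta>) < ereal (F (u k))) sequentially"
    unfolding le_Liminf_iff by blast
  then show ?thesis by simp
qed

definition sq_L2_norm :: "(real^'n::finite) set \<Rightarrow> (real^'n \<Rightarrow> real) \<Rightarrow> real" where
  "sq_L2_norm \<Omega> f = (\<integral>x. (f x)\<^sup>2 \<partial>lebesgue_on \<Omega>)"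

lemma sq_L2_norm_nonneg: "0 \<le> sq_L2_norm \<Omega> f"
  unfolding sq_L2_norm_def by (intro integral_nonneg_AE) auto

lemma L2_norm_squared: "(L2_norm \<Omega> f)\<^sup>2 = sq_L2_norm \<Omega> f"
  using sq_L2_norm_nonneg[of \<Omega> f] unfolding L2_norm_def sq_L2_norm_def by simp

context
  fixes \<Omega> :: "(real^'n::finite) set" and \<iota> :: "'v::{real_inner,complete_space} \<Rightarrow> (real^'n \<Rightarrow> real)"
  assumes emb: "compact_dense_embedding \<Omega> \<iota>"
begin

lemma embedding_linear:
  "\<iota> (a *\<^sub>R u + b *\<^sub>R v) x = a * \<iota> u x + b * \<iota> v x"
  using emb by (simp add: compact_dense_embedding_def)

lemma embedding_add: "\<iota> (u + v) x = \<iota> u x + \<iota> v x"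
  using embedding_linear[of 1 u 1 v x] by simp

lemma embedding_diff: "\<iota> (u - v) x = \<iota> u x - \<iota> v x"
  using embedding_linear[of 1 u "-1" v x] by simp

lemma embedding_measurable:
  "\<iota> u \<in> borel_measurable (lebesgue_on \<Omega>)"
  using emb by (simp add: compact_dense_embedding_def in_L2_def)

lemma embedding_square_integrable:
  "integrable (lebesgue_on \<Omega>) (\<lambda>x. (\<iota> u x)\<^sup>2)"
  using emb by (simp add: compact_dense_embedding_def in_L2_def)

lemma embedding_bounded:
  "\<exists>C. \<forall>u. L2_norm \<Omega> (\<iota> u) \<le> C * norm u"
  using emb by (simp add: compact_dense_embedding_def)

lemma embedding_injective:
  "(AE x in lebesgue_on \<Omega>. \<iota> u x = 0) \<Longrightarrow> u = 0"
  using emb by (simp add: compact_dense_embedding_def)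

lemma convex_on_sq_L2_norm_embedding: "convex_on UNIV (\<lambda>u. sq_L2_norm \<Omega> (\<iota> u))"
proof (rule convex_onI)
  fix t :: real and u v :: 'v
  assume "0 < t" "t < 1"
  have "(\<integral>x. ((1 - t) * \<iota> u x + t * \<iota> v x)\<^sup>2 \<partial>lebesgue_on \<Omega>)
      \<le> (\<integral>x. (1 - t) * (\<iota> u x)\<^sup>2 + t * (\<iota> v x)\<^sup>2 \<partial>lebesgue_on \<Omega>)"
  proof (rule integral_mono)
    show "integrable (lebesgue_on \<Omega>) (\<lambda>x. ((1 - t) * \<iota> u x + t * \<iota> v x)\<^sup>2)"
      using embedding_square_integrable[of "(1 - t) *\<^sub>R u + t *\<^sub>R v"]
      by (simp add: embedding_linear)
    show "((1 - t) * \<iota> u x + t * \<iota> v x)\<^sup>2 \<le> (1 - t) * (\<iota> u x)\<^sup>2 + t * (\<iota> v x)\<^sup>2" for x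
      using convex_onD[OF convex_power2, of t "\<iota> u x" "\<iota> v x"] \<open>0 < t\<close> \<open>t < 1\<close> by simp
  qed (use embedding_square_integrable in simp)
  then show "sq_L2_norm \<Omega> (\<iota> ((1 - t) *\<^sub>R u + t *\<^sub>R v))
      \<le> (1 - t) * sq_L2_norm \<Omega> (\<iota> u) + t * sq_L2_norm \<Omega> (\<iota> v)"
    using embedding_square_integrable
    by (simp add: sq_L2_norm_def embedding_linear)
qed simp

lemma sq_L2_norm_embedding_add_le:
  "sq_L2_norm \<Omega> (\<iota> (u + v)) \<le> 2 * sq_L2_norm \<Omega> (\<iota> u) + 2 * sq_L2_norm \<Omega> (\<iota> v)"
proof -
  have "(\<integral>x. (\<iota> u x + \<iota> v x)\<^sup>2 \<partial>lebesgue_on \<Omega>) \<le> (\<integral>x. 2 * (\<iota> u x)\<^sup>2 + 2 * (\<iota> v x)\<^sup>2 \<partial>lebesgue_on \<Omega>)"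
  proof (rule integral_mono)
    show "integrable (lebesgue_on \<Omega>) (\<lambda>x. (\<iota> u x + \<iota> v x)\<^sup>2)"
      using embedding_square_integrable[of "u + v"] by (simp add: embedding_add)
    show "(\<iota> u x + \<iota> v x)\<^sup>2 \<le> 2 * (\<iota> u x)\<^sup>2 + 2 * (\<iota> v x)\<^sup>2" for x
      using zero_le_power2[of "\<iota> u x - \<iota> v x"] by (simp add: power2_eq_square algebra_simps)
  qed (use embedding_square_integrable in simp)
  then show ?thesis
    using embedding_square_integrable by (simp add: sq_L2_norm_def embedding_add)
qed

lemma sq_L2_norm_embedding_le: "\<exists>C. \<forall>u. sq_L2_norm \<Omega> (\<iota> u) \<le> C * (norm u)\<^sup>2"
proof -
  obtain C where C: "\<And>u. L2_norm \<Omega> (\<iota> u) \<le> C * norm u"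
    using embedding_bounded by blast
  have "sq_L2_norm \<Omega> (\<iota> u) \<le> C\<^sup>2 * (norm u)\<^sup>2" for u
  proof -
    have "0 \<le> L2_norm \<Omega> (\<iota> u)" by (simp add: L2_norm_def)
    then have "(L2_norm \<Omega> (\<iota> u))\<^sup>2 \<le> (C * norm u)\<^sup>2"
      using C[of u] by (intro power_mono) auto
    then show ?thesis by (simp add: L2_norm_squared power_mult_distrib)
  qed
  then show ?thesis by blast
qed

lemma sq_L2_norm_embedding_nonpos_imp_zero:
  assumes "sq_L2_norm \<Omega> (\<iota> u) \<le> 0"
  shows "u = 0"
proof -
  have "sq_L2_norm \<Omega> (\<iota> u) = 0" using assms sq_L2_norm_nonneg[of \<Omega> "\<iota> u"] by linarith
  then have "AE x in lebesgue_on \<Omega>. (\<iota> u x)\<^sup>2 = 0"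
    using integral_nonneg_eq_0_iff_AE[OF embedding_square_integrable[of u]]
    by (simp add: sq_L2_norm_def)
  then show ?thesis
    by (intro embedding_injective) auto
qed

lemma weakly_converges_if_sq_L2_norm_null:
  assumes "\<And>k. norm (u k - v) \<le> B"
    and "(\<lambda>k. sq_L2_norm \<Omega> (\<iota> (u k - v))) \<longlonglongrightarrow> 0"
  shows "weakly_converges u v"
proof -
  obtain C where "\<And>u. sq_L2_norm \<Omega> (\<iota> u) \<le> C * (norm u)\<^sup>2"
    using sq_L2_norm_embedding_le by blast
  then have "weakly_converges (\<lambda>k. u k - v) 0"
    using convex_on_sq_L2_norm_embedding sq_L2_norm_embedding_add_le
      sq_L2_norm_embedding_nonpos_imp_zero assms
    by (intro weakly_converges_zero_if_convex_null[where q = "\<lambda>u. sq_L2_norm \<Omega> (\<iota> u)"]) auto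
  then show ?thesis
    by (simp add: weakly_converges_def inner_diff_left LIM_zero_iff)
qed

context
  assumes \<Omega>: "\<Omega> \<in> lmeasurable"
begin

lemma integrable_psi_embedding:
  assumes "0 \<le> p" "p \<le> 2" "0 \<le> \<epsilon>"
  shows "integrable (lebesgue_on \<Omega>) (\<lambda>x. psi p \<epsilon> ((\<iota> u x)\<^sup>2))"
proof (rule Bochner_Integration.integrable_bound)
  show "integrable (lebesgue_on \<Omega>) (\<lambda>x. \<epsilon> powr p + 1 + (\<iota> u x)\<^sup>2)"
    by (intro Bochner_Integration.integrable_add embedding_square_integrable
        finite_measure.integrable_const finite_measure_lebesgue_on[OF \<Omega>])
  have [measurable]: "\<iota> u \<in> borel_measurable (lebesgue_on \<Omega>)"
    by (rule embedding_measurable)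
  show "(\<lambda>x. psi p \<epsilon> ((\<iota> u x)\<^sup>2)) \<in> borel_measurable (lebesgue_on \<Omega>)"
    unfolding psi_def by measurable
  show "AE x in lebesgue_on \<Omega>. norm (psi p \<epsilon> ((\<iota> u x)\<^sup>2)) \<le> norm (\<epsilon> powr p + 1 + (\<iota> u x)\<^sup>2)"
    using psi_nonneg[of p "(\<iota> u _)\<^sup>2" \<epsilon>] psi_le[of p \<epsilon> "(\<iota> u _)\<^sup>2"] assms by auto
qed

lemma abs_G_diff_G_zero:
  assumes "0 \<le> p" "p \<le> 2" "0 \<le> \<epsilon>"
  shows "\<bar>G \<Omega> \<iota> p \<epsilon> u - G \<Omega> \<iota> p 0 u\<bar> \<le> \<epsilon> powr p * measure (lebesgue_on \<Omega>) \<Omega>"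
proof -
  have "\<bar>G \<Omega> \<iota> p \<epsilon> u - G \<Omega> \<iota> p 0 u\<bar>
      = \<bar>\<integral>x. psi p \<epsilon> ((\<iota> u x)\<^sup>2) - psi p 0 ((\<iota> u x)\<^sup>2) \<partial>lebesgue_on \<Omega>\<bar>"
    using integrable_psi_embedding assms by (simp add: G_def)
  also have "\<dots> \<le> (\<integral>x. \<epsilon> powr p \<partial>lebesgue_on \<Omega>)"
    using integrable_psi_embedding assms abs_psi_diff_psi_zero[OF assms]
    by (intro integral_abs_bound_integral finite_measure.integrable_const
        finite_measure_lebesgue_on[OF \<Omega>] Bochner_Integration.integrable_diff) auto
  finally show ?thesis by (simp add: mult.commute)
qed

lemma abs_G_zero_diff_le:
  assumes "0 < p" "p \<le> 1" "0 < \<delta>"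
  shows "\<bar>G \<Omega> \<iota> p 0 u - G \<Omega> \<iota> p 0 v\<bar>
    \<le> \<delta> powr p * measure (lebesgue_on \<Omega>) \<Omega> + \<delta> powr (p - 2) * sq_L2_norm \<Omega> (\<iota> (u - v))"
proof -
  have pointwise: "\<bar>psi p 0 ((\<iota> u x)\<^sup>2) - psi p 0 ((\<iota> v x)\<^sup>2)\<bar> \<le> \<delta> powr p + \<delta> powr (p - 2) * (\<iota> (u - v) x)\<^sup>2" for x
  proof -
    have "\<bar>psi p 0 ((\<iota> u x)\<^sup>2) - psi p 0 ((\<iota> v x)\<^sup>2)\<bar> = \<bar>\<bar>\<iota> u x\<bar> powr p - \<bar>\<iota> v x\<bar> powr p\<bar>"
      by (simp add: psi_zero power2_powr_half)
    also have "\<dots> \<le> \<bar>\<iota> u x - \<iota> v x\<bar> powr p"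
      using abs_powr_diff_le assms by simp
    also have "\<dots> \<le> \<delta> powr p + \<delta> powr (p - 2) * \<bar>\<iota> u x - \<iota> v x\<bar>\<^sup>2"
      using assms by (intro powr_le_split) auto
    finally show ?thesis by (simp add: embedding_diff)
  qed
  have "\<bar>G \<Omega> \<iota> p 0 u - G \<Omega> \<iota> p 0 v\<bar>
      = \<bar>\<integral>x. psi p 0 ((\<iota> u x)\<^sup>2) - psi p 0 ((\<iota> v x)\<^sup>2) \<partial>lebesgue_on \<Omega>\<bar>"
    using integrable_psi_embedding assms by (simp add: G_def)
  also have "\<dots> \<le> (\<integral>x. \<delta> powr p + \<delta> powr (p - 2) * (\<iota> (u - v) x)\<^sup>2 \<partial>lebesgue_on \<Omega>)"
    using integrable_psi_embedding assms pointwise embedding_square_integrable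
    by (intro integral_abs_bound_integral finite_measure.integrable_const
        finite_measure_lebesgue_on[OF \<Omega>] Bochner_Integration.integrable_diff
        Bochner_Integration.integrable_add integrable_mult_right) auto
  also have "\<dots> = \<delta> powr p * measure (lebesgue_on \<Omega>) \<Omega> + \<delta> powr (p - 2) * sq_L2_norm \<Omega> (\<iota> (u - v))"
    using embedding_square_integrable[of "u - v"]
      finite_measure.integrable_const[OF finite_measure_lebesgue_on[OF \<Omega>]]
    by (subst Bochner_Integration.integral_add) (auto simp: sq_L2_norm_def mult.commute)
  finally show ?thesis .
qed

lemma tendsto_G_zero_if_sq_L2_norm_null:
  assumes "0 < p" "p \<le> 1" and lim: "(\<lambda>k. sq_L2_norm \<Omega> (\<iota> (u k - v))) \<longlonglongrightarrow> 0"
  shows "(\<lambda>k. G \<Omega> \<iota> p 0 (u k)) \<longlonglongrightarrow> G \<Omega> \<iota> p 0 v"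
  unfolding tendsto_iff dist_real_def
proof (intro allI impI)
  fix \<eta> :: real assume "0 < \<eta>"
  define m where "m = measure (lebesgue_on \<Omega>) \<Omega>"
  have "((\<lambda>\<delta>. \<delta> powr p * m) \<longlongrightarrow> 0 * m) (at_right 0)"
    using \<open>0 < p\<close> eventually_at_right_less[of 0]
    by (intro tendsto_mult tendsto_const tendsto_zero_powrI tendsto_ident_at)
       (auto elim: eventually_mono)
  then have "eventually (\<lambda>\<delta>. \<delta> powr p * m < \<eta> / 2) (at_right 0)"
    using \<open>0 < \<eta>\<close> by (intro order_tendstoD(2)) auto
  then have "eventually (\<lambda>\<delta>. 0 < \<delta> \<and> \<delta> powr p * m < \<eta> / 2) (at_right 0)"
    using eventually_at_right_less[of 0] by (intro eventually_conj)
  then obtain \<delta> where "0 < \<delta>" and \<delta>: "\<delta> powr p * m < \<eta> / 2"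
    using eventually_happens[of _ "at_right (0::real)"] by auto
  have "eventually (\<lambda>k. sq_L2_norm \<Omega> (\<iota> (u k - v)) < \<eta> / (2 * \<delta> powr (p - 2))) sequentially"
    using lim \<open>0 < \<eta>\<close> \<open>0 < \<delta>\<close> by (intro order_tendstoD(2)) auto
  then show "eventually (\<lambda>k. \<bar>G \<Omega> \<iota> p 0 (u k) - G \<Omega> \<iota> p 0 v\<bar> < \<eta>) sequentially"
  proof eventually_elim
    case (elim k)
    then have "\<delta> powr (p - 2) * sq_L2_norm \<Omega> (\<iota> (u k - v)) < \<eta> / 2"
      using \<open>0 < \<delta>\<close> by (simp add: field_simps)
    then show ?case
      using abs_G_zero_diff_le[OF assms(1,2) \<open>0 < \<delta>\<close>, of "u k" v] \<delta> unfolding m_def by linarith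
  qed
qed

lemma abs_Phi_diff_Phi_zero:
  assumes "0 \<le> p" "p \<le> 2" "0 \<le> \<epsilon>" "0 \<le> \<beta>"
  shows "\<bar>Phi \<Omega> \<iota> F \<alpha> \<beta> p \<epsilon> u - Phi \<Omega> \<iota> F \<alpha> \<beta> p 0 u\<bar> \<le> \<beta> * \<epsilon> powr p * measure (lebesgue_on \<Omega>) \<Omega>"
proof -
  have "\<bar>Phi \<Omega> \<iota> F \<alpha> \<beta> p \<epsilon> u - Phi \<Omega> \<iota> F \<alpha> \<beta> p 0 u\<bar> = \<beta> * \<bar>G \<Omega> \<iota> p \<epsilon> u - G \<Omega> \<iota> p 0 u\<bar>"
    using \<open>0 \<le> \<beta>\<close> by (simp add: Phi_def abs_mult right_diff_distrib[symmetric])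
  also have "\<dots> \<le> \<beta> * (\<epsilon> powr p * measure (lebesgue_on \<Omega>) \<Omega>)"
    using abs_G_diff_G_zero[OF assms(1-3)] \<open>0 \<le> \<beta>\<close> by (intro mult_left_mono)
  finally show ?thesis by (simp add: mult.assoc)
qed

lemma auxiliary_minimizer_estimates:
  fixes ubar :: 'v
  assumes "0 \<le> p" "p \<le> 2" "0 \<le> \<epsilon>" "0 \<le> \<beta>"
    and aux_opt: "Phi \<Omega> \<iota> F \<alpha> \<beta> p \<epsilon> u + 1/2 * (L2_norm \<Omega> (\<lambda>x. \<iota> u x - \<iota> ubar x))\<^sup>2
      \<le> Phi \<Omega> \<iota> F \<alpha> \<beta> p \<epsilon> ubar + 1/2 * (L2_norm \<Omega> (\<lambda>x. \<iota> ubar x - \<iota> ubar x))\<^sup>2"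
    and P_opt: "Phi \<Omega> \<iota> F \<alpha> \<beta> p 0 ubar \<le> Phi \<Omega> \<iota> F \<alpha> \<beta> p 0 u"
  shows "sq_L2_norm \<Omega> (\<iota> (u - ubar)) \<le> 4 * (\<beta> * \<epsilon> powr p * measure (lebesgue_on \<Omega>) \<Omega>)"
    and "Phi \<Omega> \<iota> F \<alpha> \<beta> p 0 u \<le> Phi \<Omega> \<iota> F \<alpha> \<beta> p 0 ubar + 2 * (\<beta> * \<epsilon> powr p * measure (lebesgue_on \<Omega>) \<Omega>)"
proof -
  have "(\<lambda>x. \<iota> u x - \<iota> ubar x) = \<iota> (u - ubar)"
    by (auto simp: embedding_diff)
  then have L2_diff: "(L2_norm \<Omega> (\<lambda>x. \<iota> u x - \<iota> ubar x))\<^sup>2 = sq_L2_norm \<Omega> (\<iota> (u - ubar))"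
    by (simp add: L2_norm_squared)
  have L2_zero: "(L2_norm \<Omega> (\<lambda>x. \<iota> ubar x - \<iota> ubar x))\<^sup>2 = 0"
    by (simp add: L2_norm_def)
  note facts = L2_diff L2_zero aux_opt P_opt abs_Phi_diff_Phi_zero[OF assms(1-4), of F \<alpha> u]
      abs_Phi_diff_Phi_zero[OF assms(1-4), of F \<alpha> ubar] sq_L2_norm_nonneg[of \<Omega> "\<iota> (u - ubar)"]
  show "sq_L2_norm \<Omega> (\<iota> (u - ubar)) \<le> 4 * (\<beta> * \<epsilon> powr p * measure (lebesgue_on \<Omega>) \<Omega>)"
    using facts by linarith
  show "Phi \<Omega> \<iota> F \<alpha> \<beta> p 0 u \<le> Phi \<Omega> \<iota> F \<alpha> \<beta> p 0 ubar + 2 * (\<beta> * \<epsilon> powr p * measure (lebesgue_on \<Omega>) \<Omega>)"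
    using facts by linarith
qed

lemma tendsto_if_Phi_zero_limsup:
  assumes "weakly_lsc F" "0 < \<alpha>" "0 < p" "p \<le> 1"
    and weak: "weakly_converges u v"
    and L2_lim: "(\<lambda>k. sq_L2_norm \<Omega> (\<iota> (u k - v))) \<longlonglongrightarrow> 0"
    and limsup: "\<And>\<eta>. 0 < \<eta> \<Longrightarrow>
      eventually (\<lambda>k. Phi \<Omega> \<iota> F \<alpha> \<beta> p 0 (u k) < Phi \<Omega> \<iota> F \<alpha> \<beta> p 0 v + \<eta>) sequentially"
  shows "u \<longlonglongrightarrow> v"
proof (rule tendsto_if_weakly_converges_norm_limsup[OF weak])
  fix e :: real assume "0 < e"
  define \<eta> where "\<eta> = \<alpha> * e / 6"
  have "0 < \<eta>" using \<open>0 < \<alpha>\<close> \<open>0 < e\<close> by (simp add: \<eta>_def)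
  have "(\<lambda>k. \<beta> * G \<Omega> \<iota> p 0 (u k)) \<longlonglongrightarrow> \<beta> * G \<Omega> \<iota> p 0 v"
    by (intro tendsto_mult_left tendsto_G_zero_if_sq_L2_norm_null[OF assms(3,4) L2_lim])
  then have "eventually (\<lambda>k. \<beta> * G \<Omega> \<iota> p 0 v - \<eta> < \<beta> * G \<Omega> \<iota> p 0 (u k)) sequentially"
    using \<open>0 < \<eta>\<close> by (intro order_tendstoD(1)) auto
  with eventually_greater_if_weakly_lsc[OF assms(1) weak \<open>0 < \<eta>\<close>] limsup[OF \<open>0 < \<eta>\<close>]
  show "eventually (\<lambda>k. (norm (u k))\<^sup>2 < (norm v)\<^sup>2 + e) sequentially"
  proof eventually_elim
    case (elim k)
    then have "\<alpha> / 2 * (norm (u k))\<^sup>2 < \<alpha> / 2 * (norm v)\<^sup>2 + 3 * \<eta>"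
      by (simp add: Phi_def)
    then have "\<alpha> * (norm (u k))\<^sup>2 < \<alpha> * ((norm v)\<^sup>2 + e)"
      by (simp add: \<eta>_def algebra_simps)
    then show ?case
      using \<open>0 < \<alpha>\<close> by simp
  qed
qed

end

end

theorem lemma5p1:
  fixes \<Omega> :: "(real^'n::finite) set"
    and \<iota> :: "'v::{real_inner,complete_space} \<Rightarrow> (real^'n \<Rightarrow> real)"
    and F :: "'v \<Rightarrow> real"
    and \<alpha> \<beta> p \<rho> :: real
    and ubar :: 'v
    and \<epsilon> :: "nat \<Rightarrow> real"
    and u :: "nat \<Rightarrow> 'v"
  assumes dom: "bounded_lipschitz_domain \<Omega>"
    and emb: "compact_dense_embedding \<Omega> \<iota>"
    and F_wlsc: "weakly_lsc F"
    and F_below: "affine_lower_bound F"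
    and F_C1: "C1_frechet F"
    and \<alpha>: "\<alpha> > 0" and \<beta>: "\<beta> > 0" and p: "0 < p" "p < 1"
    and \<rho>: "\<rho> > 0"
    and local_sol: "\<forall>v. norm (v - ubar) \<le> \<rho> \<longrightarrow>
                        Phi \<Omega> \<iota> F \<alpha> \<beta> p 0 ubar \<le> Phi \<Omega> \<iota> F \<alpha> \<beta> p 0 v"
    and eps_pos: "\<forall>k. \<epsilon> k > 0"
    and eps_lim: "\<epsilon> \<longlonglongrightarrow> 0"
    and u_feas: "\<forall>k. norm (u k - ubar) \<le> \<rho>"
    and u_opt: "\<forall>k v. norm (v - ubar) \<le> \<rho> \<longrightarrow>
        Phi \<Omega> \<iota> F \<alpha> \<beta> p (\<epsilon> k) (u k) + 1/2 * (L2_norm \<Omega> (\<lambda>x. \<iota> (u k) x - \<iota> ubar x))\<^sup>2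
          \<le> Phi \<Omega> \<iota> F \<alpha> \<beta> p (\<epsilon> k) v + 1/2 * (L2_norm \<Omega> (\<lambda>x. \<iota> v x - \<iota> ubar x))\<^sup>2"
  shows "u \<longlonglongrightarrow> ubar"
proof -
  have \<Omega>: "\<Omega> \<in> lmeasurable"
    using dom lmeasurable_open unfolding bounded_lipschitz_domain_def by blast
  define E where "E k = \<beta> * \<epsilon> k powr p * measure (lebesgue_on \<Omega>) \<Omega>" for k
  have ubar_feas: "norm (ubar - ubar) \<le> \<rho>" using \<rho> by simp
  have estimates: "sq_L2_norm \<Omega> (\<iota> (u k - ubar)) \<le> 4 * E k"
      "Phi \<Omega> \<iota> F \<alpha> \<beta> p 0 (u k) \<le> Phi \<Omega> \<iota> F \<alpha> \<beta> p 0 ubar + 2 * E k" for k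
    using auxiliary_minimizer_estimates[OF emb \<Omega> _ _ _ _ u_opt[rule_format, OF ubar_feas]
        local_sol[rule_format, OF u_feas[rule_format]]] eps_pos p \<beta>
    unfolding E_def by (simp_all add: less_imp_le)
  have "E \<longlonglongrightarrow> \<beta> * 0 * measure (lebesgue_on \<Omega>) \<Omega>"
    unfolding E_def[abs_def] using eps_pos p
    by (intro tendsto_intros tendsto_zero_powrI[OF eps_lim]) (auto intro: always_eventually less_imp_le)
  then have "E \<longlonglongrightarrow> 0" by simp
  have L2_lim: "(\<lambda>k. sq_L2_norm \<Omega> (\<iota> (u k - ubar))) \<longlonglongrightarrow> 0"
    using estimates(1)
    by (intro Lim_null_comparison[OF _ tendsto_mult_right_zero[OF \<open>E \<longlonglongrightarrow> 0\<close>, of 4]] always_eventually)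
       (simp add: abs_of_nonneg sq_L2_norm_nonneg)
  show ?thesis
  proof (rule tendsto_if_Phi_zero_limsup[OF emb \<Omega> F_wlsc \<alpha> p(1) less_imp_le[OF p(2)] _ L2_lim])
    show "weakly_converges u ubar"
      using u_feas L2_lim by (intro weakly_converges_if_sq_L2_norm_null[OF emb]) auto
    fix \<eta> :: real assume "0 < \<eta>"
    with \<open>E \<longlonglongrightarrow> 0\<close> have "eventually (\<lambda>k. E k < \<eta> / 2) sequentially"
      by (intro order_tendstoD(2)) auto
    then show "eventually (\<lambda>k. Phi \<Omega> \<iota> F \<alpha> \<beta> p 0 (u k) < Phi \<Omega> \<iota> F \<alpha> \<beta> p 0 ubar + \<eta>) sequentially"
    proof eventually_elim
      case (elim k)
      with estimates(2)[of k] show ?case by linarith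
    qed
  qed
qed

end
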